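(* Let $\mathbb{K}$ be a field of characteristic $2$, let $(A,\cdot,\{-,-\},(-)^{\{2\}})$ be a restricted Poisson algebra, let $k\ge1$, and let $(A^t_k,\cdot,\mu_{(k)},\omega_{(k)})$ and $(A^t_k,\cdot,\mu'_{(k)},\omega'_{(k)})$ be two equivalent formal deformations of order $k$ of $A$, with first-order terms $(\mu_1,\omega_1)$ and $(\mu'_1,\omega'_1)$ respectively. Then $(\mu_1,\omega_1)$ and $(\mu_1',\omega_1')$ define the same class in $\mathrm{H}^2_{\rm PA}(A)$.
   Context: $\mathbb{K}$ has characteristic $2$. Restricted Poisson algebra: commutative associative $(A,\cdot)$ with Lie bracket satisfying $\{ab,c\}=a\{b,c\}+b\{a,c\}$, and a map $(-)^{\{2\}}$ with $(\lambda x)^{\{2\}}=\lambda^2x^{\{2\}}$, $\mathrm{ad}_{x^{\{2\}}}=\mathrm{ad}_x^2$, $(x+y)^{\{2\}}=x^{\{2\}}+y^{\{2\}}+\{x,y\}$, $(xy)^{\{2\}}=x^2y^{\{2\}}+y^2x^{\{2\}}+xy\{x,y\}$. $\mathfrak{X}^n(A)$: alternating $n$-linear maps $A^n\to A$ that are derivations of $\cdot$ in each argument. $C^1_{\rm PA}(A)=\mathfrak{X}^1(A)$. $C^2_{\rm PA}(A)$: pairs $(\varphi,\omega)$, $\varphi\in\mathfrak{X}^2(A)$, $\omega:A\to A$ with $\omega(\lambda x)=\lambda^2\omega(x)$, $\omega(x+y)=\omega(x)+\omega(y)+\varphi(x,y)$, $\omega(xy)=x^2\omega(y)+y^2\omega(x)+xy\varphi(x,y)$.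 $\mathrm{d}^1\psi=(\mathrm{d}_{\rm CE}\psi,\delta^1\psi)$ with $\mathrm{d}_{\rm CE}\psi(x,y)=\psi(\{x,y\})+\{x,\psi(y)\}+\{y,\psi(x)\}$ and $\delta^1\psi(x)=\psi(x^{\{2\}})+\{x,\psi(x)\}$; $\mathrm{d}^2(\varphi,\omega)=(\mathrm{d}_{\rm CE}\varphi,\delta^2\omega)$ with $\mathrm{d}_{\rm CE}\varphi(x,y,z)=\varphi(\{x,y\},z)+\varphi(\{x,z\},y)+\varphi(\{y,z\},x)+\{x,\varphi(y,z)\}+\{y,\varphi(x,z)\}+\{z,\varphi(x,y)\}$, $\delta^2\omega(x,z)=\{x,\varphi(x,z)\}+\{z,\omega(x)\}+\varphi(x^{\{2\}},z)+\varphi(\{x,z\},x)$. $\mathrm{H}^2_{\rm PA}(A)=\ker\mathrm{d}^2/\mathrm{im}\,\mathrm{d}^1$. $\mathbb{K}^t_k=\mathbb{K}[t]/(t^{k+1})$, $A^t_k=A\otimes\mathbb{K}^t_k$. A formal deformation of order $k$: $\mu_{(k)}=\{-,-\}+\sum_{i=1}^kt^i\mu_i$, $\omega_{(k)}=(-)^{\{2\}}+\sum_{i=1}^kt^i\omega_i$ with $(\mu_i,\omega_i)\in C^2_{\rm PA}(A)$ such that $(A^t_k,\mu_{(k)},\omega_{(k)})$ is a restricted Lie algebra over $\mathbb{K}^t_k$ ($\mu$ extended bilinearly, $\omega$ extended by $\omega(\lambda X)=\lambda^2\omega(X)$, $\omega(X+Y)=\omega(X)+\omega(Y)+\mu(X,Y)$).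 Two such deformations are equivalent if there is an isomorphism of restricted Poisson algebras (preserving $\cdot$, the brackets and the 2-maps) between them of the form $\Psi=\mathrm{id}+\sum_{i\ge1}t^i\psi_i$ with $\psi_i:A\to A$ linear (extended $\mathbb{K}^t_k$-linearly). *)

theory Defs
  imports Complex_Main
begin

text \<open>Elements of A^t_k = A \<otimes> K[t]/(t^(k+1)) are
 represented by their coefficient sequences nat \<Rightarrow> 'a, vanishing above degree k;
 elements of K^t_k likewise by nat \<Rightarrow> 'k.\<close>

definition bilinear_map :: "('k::field \<Rightarrow> 'a::ab_group_add \<Rightarrow> 'a) \<Rightarrow> ('a \<Rightarrow> 'a \<Rightarrow> 'a) \<Rightarrow> bool" where
  "bilinear_map sc f \<longleftrightarrow>
     (\<forall>x. Vector_Spaces.linear sc sc (f x)) \<and> (\<forall>y. Vector_Spaces.linear sc sc (\<lambda>x. f x y))"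

definition restricted_poisson_algebra ::
  "('k::field \<Rightarrow> 'a::ab_group_add \<Rightarrow> 'a) \<Rightarrow> ('a \<Rightarrow> 'a \<Rightarrow> 'a) \<Rightarrow> ('a \<Rightarrow> 'a \<Rightarrow> 'a) \<Rightarrow> ('a \<Rightarrow> 'a) \<Rightarrow> bool" where
  "restricted_poisson_algebra sc mul br sq \<longleftrightarrow>
     vector_space sc \<and>
     bilinear_map sc mul \<and>
     (\<forall>a b c. mul (mul a b) c = mul a (mul b c)) \<and>
     (\<forall>a b. mul a b = mul b a) \<and>
     bilinear_map sc br \<and>
     (\<forall>x. br x x = 0) \<and>
     (\<forall>x y z. br x (br y z) + br y (br z x) + br z (br x y) = 0) \<and>
     (\<forall>a b c. br (mul a b) c = mul a (br b c) + mul b (br a c)) \<and>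
     (\<forall>l x. sq (sc l x) = sc (l * l) (sq x)) \<and>
     (\<forall>x y. br (sq x) y = br x (br x y)) \<and>
     (\<forall>x y. sq (x + y) = sq x + sq y + br x y) \<and>
     (\<forall>x y. sq (mul x y) = mul (mul x x) (sq y) + mul (mul y y) (sq x) + mul (mul x y) (br x y))"

definition X1 :: "('k::field \<Rightarrow> 'a::ab_group_add \<Rightarrow> 'a) \<Rightarrow> ('a \<Rightarrow> 'a \<Rightarrow> 'a) \<Rightarrow> ('a \<Rightarrow> 'a) \<Rightarrow> bool" where
  "X1 sc mul \<psi> \<longleftrightarrow> Vector_Spaces.linear sc sc \<psi> \<and> (\<forall>a b. \<psi> (mul a b) = mul a (\<psi> b) + mul b (\<psi> a))"

definition X2 :: "('k::field \<Rightarrow> 'a::ab_group_add \<Rightarrow> 'a) \<Rightarrow> ('a \<Rightarrow> 'a \<Rightarrow> 'a) \<Rightarrow> ('a \<Rightarrow> 'a \<Rightarrow> 'a) \<Rightarrow> bool" where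
  "X2 sc mul \<phi> \<longleftrightarrow> bilinear_map sc \<phi> \<and> (\<forall>x. \<phi> x x = 0) \<and>
     (\<forall>a b c. \<phi> (mul a b) c = mul a (\<phi> b c) + mul b (\<phi> a c)) \<and>
     (\<forall>a b c. \<phi> c (mul a b) = mul a (\<phi> c b) + mul b (\<phi> c a))"

definition C2 :: "('k::field \<Rightarrow> 'a::ab_group_add \<Rightarrow> 'a) \<Rightarrow> ('a \<Rightarrow> 'a \<Rightarrow> 'a) \<Rightarrow> ('a \<Rightarrow> 'a \<Rightarrow> 'a) \<Rightarrow> ('a \<Rightarrow> 'a) \<Rightarrow> bool" where
  "C2 sc mul \<phi> \<omega> \<longleftrightarrow> X2 sc mul \<phi> \<and>
     (\<forall>l x. \<omega> (sc l x) = sc (l * l) (\<omega> x)) \<and>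
     (\<forall>x y. \<omega> (x + y) = \<omega> x + \<omega> y + \<phi> x y) \<and>
     (\<forall>x y. \<omega> (mul x y) = mul (mul x x) (\<omega> y) + mul (mul y y) (\<omega> x) + mul (mul x y) (\<phi> x y))"

definition dCE1 :: "('a::ab_group_add \<Rightarrow> 'a \<Rightarrow> 'a) \<Rightarrow> ('a \<Rightarrow> 'a) \<Rightarrow> 'a \<Rightarrow> 'a \<Rightarrow> 'a" where
  "dCE1 br \<psi> x y = \<psi> (br x y) + br x (\<psi> y) + br y (\<psi> x)"

definition delta1 :: "('a::ab_group_add \<Rightarrow> 'a \<Rightarrow> 'a) \<Rightarrow> ('a \<Rightarrow> 'a) \<Rightarrow> ('a \<Rightarrow> 'a) \<Rightarrow> 'a \<Rightarrow> 'a" where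
  "delta1 br sq \<psi> x = \<psi> (sq x) + br x (\<psi> x)"

definition dCE2 :: "('a::ab_group_add \<Rightarrow> 'a \<Rightarrow> 'a) \<Rightarrow> ('a \<Rightarrow> 'a \<Rightarrow> 'a) \<Rightarrow> 'a \<Rightarrow> 'a \<Rightarrow> 'a \<Rightarrow> 'a" where
  "dCE2 br \<phi> x y z = \<phi> (br x y) z + \<phi> (br x z) y + \<phi> (br y z) x
      + br x (\<phi> y z) + br y (\<phi> x z) + br z (\<phi> x y)"

definition delta2 :: "('a::ab_group_add \<Rightarrow> 'a \<Rightarrow> 'a) \<Rightarrow> ('a \<Rightarrow> 'a) \<Rightarrow> ('a \<Rightarrow> 'a \<Rightarrow> 'a) \<Rightarrow> ('a \<Rightarrow> 'a) \<Rightarrow> 'a \<Rightarrow> 'a \<Rightarrow> 'a" where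
  "delta2 br sq \<phi> \<omega> x z = br x (\<phi> x z) + br z (\<omega> x) + \<phi> (sq x) z + \<phi> (br x z) x"

definition cocycle2 :: "('k::field \<Rightarrow> 'a::ab_group_add \<Rightarrow> 'a) \<Rightarrow> ('a \<Rightarrow> 'a \<Rightarrow> 'a) \<Rightarrow> ('a \<Rightarrow> 'a \<Rightarrow> 'a) \<Rightarrow> ('a \<Rightarrow> 'a)
      \<Rightarrow> ('a \<Rightarrow> 'a \<Rightarrow> 'a) \<Rightarrow> ('a \<Rightarrow> 'a) \<Rightarrow> bool" where
  "cocycle2 sc mul br sq \<phi> \<omega> \<longleftrightarrow> C2 sc mul \<phi> \<omega> \<and>
     (\<forall>x y z. dCE2 br \<phi> x y z = 0) \<and> (\<forall>x z. delta2 br sq \<phi> \<omega> x z = 0)"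

definition same_H2_class :: "('k::field \<Rightarrow> 'a::ab_group_add \<Rightarrow> 'a) \<Rightarrow> ('a \<Rightarrow> 'a \<Rightarrow> 'a) \<Rightarrow> ('a \<Rightarrow> 'a \<Rightarrow> 'a) \<Rightarrow> ('a \<Rightarrow> 'a)
      \<Rightarrow> ('a \<Rightarrow> 'a \<Rightarrow> 'a) \<Rightarrow> ('a \<Rightarrow> 'a) \<Rightarrow> ('a \<Rightarrow> 'a \<Rightarrow> 'a) \<Rightarrow> ('a \<Rightarrow> 'a) \<Rightarrow> bool" where
  "same_H2_class sc mul br sq \<phi> \<omega> \<phi>' \<omega>' \<longleftrightarrow>
     cocycle2 sc mul br sq \<phi> \<omega> \<and> cocycle2 sc mul br sq \<phi>' \<omega>' \<and>
     (\<exists>\<psi>. X1 sc mul \<psi> \<and> (\<forall>x y. \<phi> x y - \<phi>' x y = dCE1 br \<psi> x y) \<and>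
          (\<forall>x. \<omega> x - \<omega>' x = delta1 br sq \<psi> x))"

definition trunc :: "nat \<Rightarrow> (nat \<Rightarrow> 'b::zero) set" where
  "trunc k = {X. \<forall>n>k. X n = 0}"

text \<open>Full sequence of bracket terms \<open>\<mu>\<^sub>0 = {-,-}\<close>, \<open>\<mu>\<^sub>i\<close> for \<open>i \<ge> 1\<close>; same for \<open>\<omega>\<close>.\<close>
definition full_seq :: "'f \<Rightarrow> (nat \<Rightarrow> 'f) \<Rightarrow> nat \<Rightarrow> 'f" where
  "full_seq f0 fs i = (if i = 0 then f0 else fs i)"

definition tadd :: "nat \<Rightarrow> (nat \<Rightarrow> 'b::ab_group_add) \<Rightarrow> (nat \<Rightarrow> 'b) \<Rightarrow> nat \<Rightarrow> 'b" where
  "tadd k X Y = (\<lambda>n. if n \<le> k then X n + Y n else 0)"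

definition tmulK :: "nat \<Rightarrow> (nat \<Rightarrow> 'k::field) \<Rightarrow> (nat \<Rightarrow> 'k) \<Rightarrow> nat \<Rightarrow> 'k" where
  "tmulK k s r = (\<lambda>n. if n \<le> k then (\<Sum>i\<le>n. s i * r (n - i)) else 0)"

definition tscale :: "('k::field \<Rightarrow> 'a::ab_group_add \<Rightarrow> 'a) \<Rightarrow> nat \<Rightarrow> (nat \<Rightarrow> 'k) \<Rightarrow> (nat \<Rightarrow> 'a) \<Rightarrow> nat \<Rightarrow> 'a" where
  "tscale sc k s X = (\<lambda>n. if n \<le> k then (\<Sum>i\<le>n. sc (s i) (X (n - i))) else 0)"

text \<open>Bilinear extension of a family \<open>M\<^sub>i\<close> of bilinear maps: \<open>\<Sum> t\<^sup>i M\<^sub>i\<close> on \<open>A\<^sup>t\<^sub>k\<close>.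
  Used both for the commutative product (with \<open>M\<^sub>0 = \<cdot>\<close>, \<open>M\<^sub>i = 0\<close>) and the deformed bracket.\<close>
definition bil_ext :: "nat \<Rightarrow> (nat \<Rightarrow> 'a::ab_group_add \<Rightarrow> 'a \<Rightarrow> 'a) \<Rightarrow> (nat \<Rightarrow> 'a) \<Rightarrow> (nat \<Rightarrow> 'a) \<Rightarrow> nat \<Rightarrow> 'a" where
  "bil_ext k M X Y = (\<lambda>n. if n \<le> k then
      (\<Sum>i\<le>n. \<Sum>j\<le>n - i. M i (X j) (Y (n - i - j))) else 0)"

text \<open>Extension of \<open>\<omega>\<^sub>(\<^sub>k\<^sub>) = \<Sum> t\<^sup>i W\<^sub>i\<close> to \<open>A\<^sup>t\<^sub>k\<close> forced by
 \<open>\<omega>(\<lambda>X) = \<lambda>\<^sup>2\<omega>(X)\<close> and \<open>\<omega>(X+Y) = \<omega>(X)+\<omega>(Y)+\<mu>(X,Y)\<close>: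
 \<open>\<omega>(\<Sum>\<^sub>j t\<^sup>j x\<^sub>j) = \<Sum>\<^sub>j t\<^sup>2\<^sup>j \<omega>(x\<^sub>j) + \<Sum>\<^sub>j\<^sub><\<^sub>l t\<^sup>j\<^sup>+\<^sup>l \<mu>(x\<^sub>j,x\<^sub>l)\<close>.\<close>
definition quad_ext :: "nat \<Rightarrow> (nat \<Rightarrow> 'a::ab_group_add \<Rightarrow> 'a \<Rightarrow> 'a) \<Rightarrow> (nat \<Rightarrow> 'a \<Rightarrow> 'a) \<Rightarrow> (nat \<Rightarrow> 'a) \<Rightarrow> nat \<Rightarrow> 'a" where
  "quad_ext k M W X = (\<lambda>n. if n \<le> k then
      (\<Sum>j\<in>{j. 2 * j \<le> n}. W (n - 2 * j) (X j))
      + (\<Sum>j\<le>n. \<Sum>l\<in>{l. j < l \<and> j + l \<le> n}. M (n - j - l) (X j) (X l))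
     else 0)"

definition restricted_lie_trunc :: "('k::field \<Rightarrow> 'a::ab_group_add \<Rightarrow> 'a) \<Rightarrow> nat
    \<Rightarrow> ((nat \<Rightarrow> 'a) \<Rightarrow> (nat \<Rightarrow> 'a) \<Rightarrow> nat \<Rightarrow> 'a) \<Rightarrow> ((nat \<Rightarrow> 'a) \<Rightarrow> nat \<Rightarrow> 'a) \<Rightarrow> bool" where
  "restricted_lie_trunc sc k B W \<longleftrightarrow>
     (\<forall>X\<in>trunc k. \<forall>Y\<in>trunc k. B X Y \<in> trunc k) \<and> (\<forall>X\<in>trunc k. W X \<in> trunc k) \<and>
     (\<forall>X\<in>trunc k. \<forall>Y\<in>trunc k. \<forall>Z\<in>trunc k.
        B (tadd k X Y) Z = tadd k (B X Z) (B Y Z) \<and> B Z (tadd k X Y) = tadd k (B Z X) (B Z Y)) \<and>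
     (\<forall>s\<in>trunc k. \<forall>X\<in>trunc k. \<forall>Y\<in>trunc k.
        B (tscale sc k s X) Y = tscale sc k s (B X Y) \<and> B X (tscale sc k s Y) = tscale sc k s (B X Y)) \<and>
     (\<forall>X\<in>trunc k. B X X = (\<lambda>_. 0)) \<and>
     (\<forall>X\<in>trunc k. \<forall>Y\<in>trunc k. \<forall>Z\<in>trunc k.
        tadd k (tadd k (B X (B Y Z)) (B Y (B Z X))) (B Z (B X Y)) = (\<lambda>_. 0)) \<and>
     (\<forall>s\<in>trunc k. \<forall>X\<in>trunc k. W (tscale sc k s X) = tscale sc k (tmulK k s s) (W X)) \<and>
     (\<forall>X\<in>trunc k. \<forall>Y\<in>trunc k. B (W X) Y = B X (B X Y)) \<and>
     (\<forall>X\<in>trunc k. \<forall>Y\<in>trunc k. W (tadd k X Y) = tadd k (tadd k (W X) (W Y)) (B X Y))"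

definition formal_deformation :: "('k::field \<Rightarrow> 'a::ab_group_add \<Rightarrow> 'a) \<Rightarrow> ('a \<Rightarrow> 'a \<Rightarrow> 'a) \<Rightarrow> ('a \<Rightarrow> 'a \<Rightarrow> 'a)
    \<Rightarrow> ('a \<Rightarrow> 'a) \<Rightarrow> nat \<Rightarrow> (nat \<Rightarrow> 'a \<Rightarrow> 'a \<Rightarrow> 'a) \<Rightarrow> (nat \<Rightarrow> 'a \<Rightarrow> 'a) \<Rightarrow> bool" where
  "formal_deformation sc mul br sq k mus oms \<longleftrightarrow>
     (\<forall>i\<in>{1..k}. C2 sc mul (mus i) (oms i)) \<and>
     restricted_lie_trunc sc k (bil_ext k (full_seq br mus)) (quad_ext k (full_seq br mus) (full_seq sq oms))"

definition psi_ext :: "nat \<Rightarrow> (nat \<Rightarrow> 'a::ab_group_add \<Rightarrow> 'a) \<Rightarrow> (nat \<Rightarrow> 'a) \<Rightarrow> nat \<Rightarrow> 'a" where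
  "psi_ext k \<psi> X = (\<lambda>n. if n \<le> k then X n + (\<Sum>i\<in>{1..n}. \<psi> i (X (n - i))) else 0)"

definition equivalent_deformations :: "('k::field \<Rightarrow> 'a::ab_group_add \<Rightarrow> 'a) \<Rightarrow> ('a \<Rightarrow> 'a \<Rightarrow> 'a) \<Rightarrow> ('a \<Rightarrow> 'a \<Rightarrow> 'a)
    \<Rightarrow> ('a \<Rightarrow> 'a) \<Rightarrow> nat \<Rightarrow> (nat \<Rightarrow> 'a \<Rightarrow> 'a \<Rightarrow> 'a) \<Rightarrow> (nat \<Rightarrow> 'a \<Rightarrow> 'a)
    \<Rightarrow> (nat \<Rightarrow> 'a \<Rightarrow> 'a \<Rightarrow> 'a) \<Rightarrow> (nat \<Rightarrow> 'a \<Rightarrow> 'a) \<Rightarrow> bool" where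
  "equivalent_deformations sc mul br sq k mus oms mus' oms' \<longleftrightarrow>
     (\<exists>\<psi>. (\<forall>i\<in>{1..k}. Vector_Spaces.linear sc sc (\<psi> i)) \<and>
        (let \<Psi> = psi_ext k \<psi>;
             P = bil_ext k (\<lambda>i. if i = 0 then mul else (\<lambda>_ _. 0));
             B = bil_ext k (full_seq br mus); W = quad_ext k (full_seq br mus) (full_seq sq oms);
             B' = bil_ext k (full_seq br mus'); W' = quad_ext k (full_seq br mus') (full_seq sq oms')
         in bij_betw \<Psi> (trunc k) (trunc k) \<and>
            (\<forall>X\<in>trunc k. \<forall>Y\<in>trunc k. \<Psi> (P X Y) = P (\<Psi> X) (\<Psi> Y)) \<and>
            (\<forall>X\<in>trunc k. \<forall>Y\<in>trunc k. \<Psi> (B X Y) = B' (\<Psi> X) (\<Psi> Y)) \<and>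
            (\<forall>X\<in>trunc k. \<Psi> (W X) = W' (\<Psi> X))))"

end

theory Submission
  imports Defs
begin

text \<open>Everything is read off the coefficient of \<open>t\<close>. Evaluated on constant elements
  \<open>x, y, z \<in> A \<subseteq> A\<^sup>t\<^sub>k\<close>, the Jacobi identity and the identity
  \<open>\<mu>(\<omega>(X), Y) = \<mu>(X, \<mu>(X, Y))\<close> of the deformation give, in degree \<open>1\<close>, exactly
  \<open>d\<^sub>C\<^sub>E(\<mu>\<^sub>1) = 0\<close> and \<open>\<delta>\<^sup>2(\<omega>\<^sub>1) = 0\<close>. Likewise, the degree-\<open>1\<close> parts of the
  compatibility of \<open>\<Psi> = id + t \<psi>\<^sub>1 + \<dots>\<close> with the product, the bracket and the 2-map say that
  \<open>\<psi>\<^sub>1\<close> is a derivation with \<open>(\<mu>\<^sub>1 - \<mu>'\<^sub>1, \<omega>\<^sub>1 - \<omega>'\<^sub>1) = d\<^sup>1 \<psi>\<^sub>1\<close>.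
  Characteristic 2 enters only through \<open>-a = a\<close>.\<close>

definition tconst :: "'a::zero \<Rightarrow> nat \<Rightarrow> 'a" where
  "tconst x = (\<lambda>n. if n = 0 then x else 0)"

lemma tconst_in_trunc: "tconst x \<in> trunc k"
  by (simp add: tconst_def trunc_def)

lemma tconst_0 [simp]: "tconst x 0 = x"
  and tconst_Suc [simp]: "tconst x (Suc n) = 0"
  by (simp_all add: tconst_def)

lemma full_seq_0 [simp]: "full_seq f0 fs 0 = f0"
  and full_seq_Suc [simp]: "full_seq f0 fs (Suc n) = fs (Suc n)"
  by (simp_all add: full_seq_def)

lemma tadd_coeff_1: "1 \<le> k \<Longrightarrow> tadd k X Y 1 = X 1 + Y 1"
  by (simp add: tadd_def)

lemma bil_ext_coeff_0: "bil_ext k M X Y 0 = M 0 (X 0) (Y 0)"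
  by (simp add: bil_ext_def)

lemma bil_ext_coeff_1:
  "1 \<le> k \<Longrightarrow> bil_ext k M X Y 1 = M 0 (X 0) (Y 1) + M 0 (X 1) (Y 0) + M 1 (X 0) (Y 0)"
  by (simp add: bil_ext_def)

lemma quad_ext_coeff_0: "quad_ext k M W X 0 = W 0 (X 0)"
proof -
  have empty: "{l::nat. l = 0 \<and> 0 < l} = {}"
    by auto
  show ?thesis
    by (simp add: quad_ext_def empty)
qed

lemma quad_ext_coeff_1: "1 \<le> k \<Longrightarrow> quad_ext k M W X 1 = W 1 (X 0) + M 0 (X 0) (X 1)"
proof -
  have index_sets: "{j::nat. 2 * j \<le> Suc 0} = {0}" "{l::nat. 0 < l \<and> l \<le> Suc 0} = {1}"
    "{l::nat. l = 0 \<and> Suc 0 < l} = {}"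
    by auto
  show "1 \<le> k \<Longrightarrow> ?thesis"
    by (simp add: quad_ext_def index_sets)
qed

lemma psi_ext_coeff_0: "psi_ext k \<psi> X 0 = X 0"
  by (simp add: psi_ext_def)

lemma psi_ext_coeff_1: "1 \<le> k \<Longrightarrow> psi_ext k \<psi> X 1 = X 1 + \<psi> 1 (X 0)"
  by (simp add: psi_ext_def)

lemma bilinear_map_add_left: "bilinear_map sc f \<Longrightarrow> f (x + y) z = f x z + f y z"
  and bilinear_map_add_right: "bilinear_map sc f \<Longrightarrow> f z (x + y) = f z x + f z y"
  by (auto simp: bilinear_map_def Vector_Spaces.linear_iff)

lemma bilinear_map_zero_left: "bilinear_map sc f \<Longrightarrow> f 0 x = 0"
  using bilinear_map_add_left[where x=0 and y=0] by fastforce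

lemma bilinear_map_zero_right: "bilinear_map sc f \<Longrightarrow> f x 0 = 0"
  using bilinear_map_add_right[where x=0 and y=0] by fastforce

lemma alternating_bilinear_antisym:
  assumes "bilinear_map sc f" and "\<And>x. f x x = 0"
  shows "f y x = - f x y"
proof -
  have "f (x + y) (x + y) = f x x + f x y + f y x + f y y"
    by (simp add: bilinear_map_add_left[OF assms(1)] bilinear_map_add_right[OF assms(1)])
  then have "f x y + f y x = 0"
    by (simp add: assms(2))
  then show ?thesis
    by (simp add: eq_neg_iff_add_eq_0 add.commute)
qed

lemma char2_add_self:
  fixes sc :: "'k::field \<Rightarrow> 'a::ab_group_add \<Rightarrow> 'a" and x :: 'a
  assumes "CHAR('k) = 2" and "vector_space sc"
  shows "x + x = 0"
proof -
  interpret vector_space sc by (fact assms(2))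
  have "(1::'k) + 1 = 0"
    using of_nat_CHAR[where 'a='k] assms(1) by simp
  then have "sc (1 + 1) x = 0"
    by simp
  then show ?thesis
    by (simp only: scale_left_distrib scale_one)
qed

lemma neg_eq_self_char2:
  fixes a :: "'a::ab_group_add"
  assumes "\<And>x::'a. x + x = 0"
  shows "- a = a"
  using assms[of a] by (simp add: minus_unique)

lemma add_eq_0_iff_eq_char2:
  fixes a :: "'a::ab_group_add"
  assumes "\<And>x::'a. x + x = 0"
  shows "a + b = 0 \<longleftrightarrow> a = b"
  by (simp add: eq_neg_iff_add_eq_0[symmetric] neg_eq_self_char2[OF assms])

lemma diff_eq_add_if_add_eq_char2:
  fixes a :: "'a::ab_group_add"
  assumes "\<And>x::'a. x + x = 0" and "a + c = b + d"
  shows "a - b = c + d"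
proof -
  from assms(2) have "a - b = d - c"
    by (simp add: algebra_simps)
  then show ?thesis
    by (simp add: neg_eq_self_char2[OF assms(1)] add.commute)
qed

lemma alternating_bilinear_sym_char2:
  fixes f :: "'a::ab_group_add \<Rightarrow> 'a \<Rightarrow> 'a"
  assumes "\<And>x::'a. x + x = 0"
    and "bilinear_map sc f" and "\<And>x. f x x = 0"
  shows "f x y = f y x"
  using alternating_bilinear_antisym[OF assms(2,3), where x=x and y=y] neg_eq_self_char2[OF assms(1)]
  by metis

lemma psi_ext_bil_ext_hom_coeff_1:
  assumes k: "1 \<le> k" and "bilinear_map sc (M 0)" and "bilinear_map sc (M' 0)"
    and "psi_ext k \<psi> (bil_ext k M (tconst x) (tconst y))
       = bil_ext k M' (psi_ext k \<psi> (tconst x)) (psi_ext k \<psi> (tconst y))"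
  shows "M 1 x y + \<psi> 1 (M 0 x y) = M' 0 x (\<psi> 1 y) + M' 0 (\<psi> 1 x) y + M' 1 x y"
  using fun_cong[OF assms(4), of 1]
  unfolding psi_ext_coeff_1[OF k] psi_ext_coeff_0 bil_ext_coeff_1[OF k] bil_ext_coeff_0
  by (simp add: bilinear_map_zero_left[OF assms(2)] bilinear_map_zero_right[OF assms(2)]
      bilinear_map_zero_left[OF assms(3)] bilinear_map_zero_right[OF assms(3)])

lemma psi_ext_quad_ext_hom_coeff_1:
  assumes k: "1 \<le> k" and "bilinear_map sc (M 0)"
    and "psi_ext k \<psi> (quad_ext k M W (tconst x)) = quad_ext k M' W' (psi_ext k \<psi> (tconst x))"
  shows "W 1 x + \<psi> 1 (W 0 x) = W' 1 x + M' 0 x (\<psi> 1 x)"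
  using fun_cong[OF assms(3), of 1]
  unfolding psi_ext_coeff_1[OF k] psi_ext_coeff_0 quad_ext_coeff_1[OF k] quad_ext_coeff_0
  by (simp add: bilinear_map_zero_right[OF assms(2)])

lemma formal_deformation_first_order_jacobi:
  fixes sc :: "'k::field \<Rightarrow> 'a::ab_group_add \<Rightarrow> 'a"
  assumes char2: "\<And>x::'a. x + x = 0"
    and rpa: "restricted_poisson_algebra sc mul br sq" and k: "1 \<le> k"
    and fd: "formal_deformation sc mul br sq k mus oms"
  shows "dCE2 br (mus 1) x y z = 0"
proof -
  have br: "bilinear_map sc br" "\<And>x. br x x = 0"
    using rpa by (auto simp: restricted_poisson_algebra_def)
  have mu: "bilinear_map sc (mus 1)" "\<And>x. mus 1 x x = 0"
    using fd k by (auto simp: formal_deformation_def C2_def X2_def)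
  define B where "B = bil_ext k (full_seq br mus)"
  have "tadd k (tadd k (B X (B Y Z)) (B Y (B Z X))) (B Z (B X Y)) 1 = 0"
    if "X \<in> trunc k" "Y \<in> trunc k" "Z \<in> trunc k" for X Y Z
    using fd that by (auto simp: formal_deformation_def restricted_lie_trunc_def B_def)
  from this[OF tconst_in_trunc tconst_in_trunc tconst_in_trunc, of x y z]
  have "br x (mus 1 y z) + mus 1 x (br y z) + (br y (mus 1 z x) + mus 1 y (br z x))
      + (br z (mus 1 x y) + mus 1 z (br x y)) = 0"
    unfolding B_def tadd_coeff_1[OF k] bil_ext_coeff_1[OF k] bil_ext_coeff_0
    by (simp add: bilinear_map_zero_left[OF br(1)] bilinear_map_zero_right[OF br(1)]
        bilinear_map_zero_left[OF mu(1)] bilinear_map_zero_right[OF mu(1)])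
  moreover have "mus 1 x (br y z) = mus 1 (br y z) x" "mus 1 y (br z x) = mus 1 (br x z) y"
    "mus 1 z (br x y) = mus 1 (br x y) z" "mus 1 z x = mus 1 x z"
    by (metis alternating_bilinear_sym_char2[OF char2 mu] alternating_bilinear_sym_char2[OF char2 br])+
  ultimately show ?thesis
    by (simp add: dCE2_def ac_simps)
qed

lemma formal_deformation_first_order_restricted:
  fixes sc :: "'k::field \<Rightarrow> 'a::ab_group_add \<Rightarrow> 'a"
  assumes char2: "\<And>x::'a. x + x = 0"
    and rpa: "restricted_poisson_algebra sc mul br sq" and k: "1 \<le> k"
    and fd: "formal_deformation sc mul br sq k mus oms"
  shows "delta2 br sq (mus 1) (oms 1) x z = 0"
proof -
  have br: "bilinear_map sc br" "\<And>x. br x x = 0"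
    using rpa by (auto simp: restricted_poisson_algebra_def)
  have mu: "bilinear_map sc (mus 1)" "\<And>x. mus 1 x x = 0"
    using fd k by (auto simp: formal_deformation_def C2_def X2_def)
  define B where "B = bil_ext k (full_seq br mus)"
  define W where "W = quad_ext k (full_seq br mus) (full_seq sq oms)"
  have "B (W X) Y 1 = B X (B X Y) 1" if "X \<in> trunc k" "Y \<in> trunc k" for X Y
    using fd that by (auto simp: formal_deformation_def restricted_lie_trunc_def B_def W_def)
  from this[OF tconst_in_trunc tconst_in_trunc, of x z]
  have "br (oms 1 x) z + mus 1 (sq x) z + (br x (mus 1 x z) + mus 1 x (br x z)) = 0"
    unfolding B_def W_def bil_ext_coeff_1[OF k] bil_ext_coeff_0 quad_ext_coeff_0 quad_ext_coeff_1[OF k]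
    by (simp add: add_eq_0_iff_eq_char2[OF char2]
        bilinear_map_zero_left[OF br(1)] bilinear_map_zero_right[OF br(1)]
        bilinear_map_zero_left[OF mu(1)] bilinear_map_zero_right[OF mu(1)])
  moreover have "br (oms 1 x) z = br z (oms 1 x)" "mus 1 x (br x z) = mus 1 (br x z) x"
    by (rule alternating_bilinear_sym_char2[OF char2 br] alternating_bilinear_sym_char2[OF char2 mu])+
  ultimately show ?thesis
    by (simp add: delta2_def ac_simps)
qed

lemma formal_deformation_first_order_cocycle:
  fixes sc :: "'k::field \<Rightarrow> 'a::ab_group_add \<Rightarrow> 'a"
  assumes "\<And>x::'a. x + x = 0"
    and "restricted_poisson_algebra sc mul br sq" and "1 \<le> k"
    and "formal_deformation sc mul br sq k mus oms"
  shows "cocycle2 sc mul br sq (mus 1) (oms 1)"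
  using assms formal_deformation_first_order_jacobi[OF assms] formal_deformation_first_order_restricted[OF assms]
  by (auto simp: cocycle2_def formal_deformation_def)

lemma equivalent_deformations_first_order:
  assumes rpa: "restricted_poisson_algebra sc mul br sq" and k: "1 \<le> k"
    and equiv: "equivalent_deformations sc mul br sq k mus oms mus' oms'"
  obtains \<psi> where "Vector_Spaces.linear sc sc \<psi>"
    and "\<And>a b. \<psi> (mul a b) = mul a (\<psi> b) + mul (\<psi> a) b"
    and "\<And>x y. mus 1 x y + \<psi> (br x y) = br x (\<psi> y) + br (\<psi> x) y + mus' 1 x y"
    and "\<And>x. oms 1 x + \<psi> (sq x) = oms' 1 x + br x (\<psi> x)"
proof -
  have mul: "bilinear_map sc mul" and br: "bilinear_map sc br"
    using rpa by (simp_all add: restricted_poisson_algebra_def)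
  obtain \<psi> where linear: "\<forall>i\<in>{1..k}. Vector_Spaces.linear sc sc (\<psi> i)"
    and hom_mul: "\<And>X Y. X \<in> trunc k \<Longrightarrow> Y \<in> trunc k \<Longrightarrow>
      psi_ext k \<psi> (bil_ext k (\<lambda>i. if i = 0 then mul else (\<lambda>_ _. 0)) X Y)
      = bil_ext k (\<lambda>i. if i = 0 then mul else (\<lambda>_ _. 0)) (psi_ext k \<psi> X) (psi_ext k \<psi> Y)"
    and hom_br: "\<And>X Y. X \<in> trunc k \<Longrightarrow> Y \<in> trunc k \<Longrightarrow>
      psi_ext k \<psi> (bil_ext k (full_seq br mus) X Y)
      = bil_ext k (full_seq br mus') (psi_ext k \<psi> X) (psi_ext k \<psi> Y)"
    and hom_sq: "\<And>X. X \<in> trunc k \<Longrightarrow>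
      psi_ext k \<psi> (quad_ext k (full_seq br mus) (full_seq sq oms) X)
      = quad_ext k (full_seq br mus') (full_seq sq oms') (psi_ext k \<psi> X)"
    using equiv unfolding equivalent_deformations_def Let_def by blast
  have "Vector_Spaces.linear sc sc (\<psi> 1)"
    using linear k by simp
  moreover have "\<psi> 1 (mul a b) = mul a (\<psi> 1 b) + mul (\<psi> 1 a) b" for a b
    using psi_ext_bil_ext_hom_coeff_1[where sc = sc, OF k _ _ hom_mul[OF tconst_in_trunc tconst_in_trunc]] mul
    by simp
  moreover have "mus 1 x y + \<psi> 1 (br x y) = br x (\<psi> 1 y) + br (\<psi> 1 x) y + mus' 1 x y" for x y
    using psi_ext_bil_ext_hom_coeff_1[where sc = sc, OF k _ _ hom_br[OF tconst_in_trunc tconst_in_trunc]] br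
    by simp
  moreover have "oms 1 x + \<psi> 1 (sq x) = oms' 1 x + br x (\<psi> 1 x)" for x
    using psi_ext_quad_ext_hom_coeff_1[where sc = sc, OF k _ hom_sq[OF tconst_in_trunc]] br
    by simp
  ultimately show thesis
    using that by blast
qed

lemma equivalent_deformations_first_order_coboundary:
  fixes sc :: "'k::field \<Rightarrow> 'a::ab_group_add \<Rightarrow> 'a"
  assumes char2: "\<And>x::'a. x + x = 0"
    and rpa: "restricted_poisson_algebra sc mul br sq" and k: "1 \<le> k"
    and equiv: "equivalent_deformations sc mul br sq k mus oms mus' oms'"
  obtains \<psi> where "X1 sc mul \<psi>"
    and "\<And>x y. mus 1 x y - mus' 1 x y = dCE1 br \<psi> x y"
    and "\<And>x. oms 1 x - oms' 1 x = delta1 br sq \<psi> x"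
proof -
  have mul_comm: "\<And>a b. mul a b = mul b a"
    and br: "bilinear_map sc br" "\<And>x. br x x = 0"
    using rpa by (auto simp: restricted_poisson_algebra_def)
  obtain \<psi> where linear: "Vector_Spaces.linear sc sc \<psi>"
    and leibniz: "\<And>a b. \<psi> (mul a b) = mul a (\<psi> b) + mul (\<psi> a) b"
    and bracket: "\<And>x y. mus 1 x y + \<psi> (br x y) = br x (\<psi> y) + br (\<psi> x) y + mus' 1 x y"
    and square: "\<And>x. oms 1 x + \<psi> (sq x) = oms' 1 x + br x (\<psi> x)"
    using equivalent_deformations_first_order[OF rpa k equiv] by blast
  have "X1 sc mul \<psi>"
    using linear leibniz mul_comm by (simp add: X1_def)
  moreover have "mus 1 x y - mus' 1 x y = dCE1 br \<psi> x y" for x y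
  proof -
    have "mus 1 x y + \<psi> (br x y) = mus' 1 x y + (br x (\<psi> y) + br y (\<psi> x))"
      using bracket[of x y] alternating_bilinear_sym_char2[OF char2 br, of "\<psi> x" y]
      by (simp add: ac_simps)
    then show ?thesis
      unfolding dCE1_def by (simp add: diff_eq_add_if_add_eq_char2[OF char2] add.assoc)
  qed
  moreover have "oms 1 x - oms' 1 x = delta1 br sq \<psi> x" for x
    unfolding delta1_def using square by (rule diff_eq_add_if_add_eq_char2[OF char2])
  ultimately show thesis
    using that by blast
qed

theorem mainTheorem16:
  fixes sc :: "'k::field \<Rightarrow> 'a::ab_group_add \<Rightarrow> 'a"
    and mul br :: "'a \<Rightarrow> 'a \<Rightarrow> 'a" and sq :: "'a \<Rightarrow> 'a"
    and k :: nat
    and mus mus' :: "nat \<Rightarrow> 'a \<Rightarrow> 'a \<Rightarrow> 'a" and oms oms' :: "nat \<Rightarrow> 'a \<Rightarrow> 'a"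
  assumes "CHAR('k) = 2"
    and "restricted_poisson_algebra sc mul br sq"
    and "k \<ge> 1"
    and "formal_deformation sc mul br sq k mus oms"
    and "formal_deformation sc mul br sq k mus' oms'"
    and "equivalent_deformations sc mul br sq k mus oms mus' oms'"
  shows "same_H2_class sc mul br sq (mus 1) (oms 1) (mus' 1) (oms' 1)"
proof -
  have "vector_space sc"
    using assms(2) by (simp add: restricted_poisson_algebra_def)
  then have char2: "\<And>x::'a. x + x = 0"
    using char2_add_self[OF assms(1)] by blast
  obtain \<psi> where "X1 sc mul \<psi>"
    and "\<And>x y. mus 1 x y - mus' 1 x y = dCE1 br \<psi> x y"
    and "\<And>x. oms 1 x - oms' 1 x = delta1 br sq \<psi> x"
    using equivalent_deformations_first_order_coboundary[OF char2 assms(2,3,6)] by blast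
  moreover have "cocycle2 sc mul br sq (mus 1) (oms 1)" "cocycle2 sc mul br sq (mus' 1) (oms' 1)"
    using formal_deformation_first_order_cocycle[OF char2 assms(2,3)] assms(4,5) by blast+
  ultimately show ?thesis
    unfolding same_H2_class_def by blast
qed

end
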